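(* In the approximation setting, let $k\in\mathbb N$ and let $\psi\in C_c^\infty(\Omega)$ be nonnegative. Then there is a constant $C(k,\|\psi\|_{W^{1,\infty}(\Omega)})$, independent of $n$ and of $\varepsilon\in(0,1)$, such that $$\int_{\Omega_T}\big|A(t,x,\nabla_xu^n)\cdot\nabla_xu^n\,T''_{k,\varepsilon}(u^n)\,\psi(x)\big|\,dx\,dt\le C(k,\|\psi\|_{W^{1,\infty}(\Omega)}).$$
   Context: Standing setting: $\Omega\subset\mathbb{R}^d$ bounded Lipschitz, $\Omega_T=(0,T)\times\Omega$; $p$ measurable, log-Hölder continuous in space uniformly in time, $1<p_{\min}\le p\le p_{\max}<\infty$; $p'=p/(p-1)$. $A$ satisfies (A1) Carathéodory; (A2) $|\xi|^{p(t,x)}+|A(t,x,\xi)|^{p'(t,x)}\le c\,A(t,x,\xi)\cdot\xi+h(t,x)$ with $c>0$, $h\in L^\infty(\Omega_T)$; (A3) monotonicity $(A(t,x,\xi)-A(t,x,\eta))\cdot(\xi-\eta)\ge0$; (A4) $A(t,x,0)=0$. Truncations: $T_k(z)=z$ for $|z|\le k$, $=k\,\mathrm{sign}(z)$ otherwise; $G_k(s)=\int_0^sT_k$. Smoothed truncation: for $k>0$, $\varepsilon\in(0,1)$, $T_{k,\varepsilon}\in C^2(\mathbb R)$ is any function with $T_{k,\varepsilon}(z)=z$ for $|z|\le k$, $T_{k,\varepsilon}(z)=\mathrm{sign}(z)(k+\varepsilon/2)$ for $|z|\ge k+\varepsilon$, $0\le T'_{k,\varepsilon}\le1$, concave on $\mathbb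 R_+$, convex on $\mathbb R_-$, and $|T''_{k,\varepsilon}|\le C\varepsilon^{-1}$. Approximation setting: $f^n\in L^\infty(\Omega_T)$, $u_0^n\in L^\infty(\Omega)$ with $\sup_n(\|u_0^n\|_{L^1(\Omega)}+\|f^n\|_{L^1(\Omega_T)})<\infty$; $u^n\in L^1(0,T;W^{1,1}_0(\Omega))\cap L^\infty(0,T;L^2(\Omega))$ with $\nabla_xu^n\in L^{p(t,x)}$, $A(t,x,\nabla_xu^n)\in L^{p'(t,x)}$, satisfying $-\int_{\Omega_T}u^n\partial_t\varphi-\int_\Omega u_0^n\varphi(0)+\int_{\Omega_T}A(t,x,\nabla_xu^n)\cdot\nabla_x\varphi=\int_{\Omega_T}f^n\varphi$ for all $\varphi\in C_c^\infty([0,T)\times\Omega)$ and the energy equality $\int_\Omega G_k(u^n(t))-G_k(u_0^n)\,dx=-\int_0^t\!\int_\Omega A(s,x,\nabla_xu^n)\cdot\nabla_xT_k(u^n)+\int_0^t\!\int_\Omega f^nT_k(u^n)$ for all $k>0$ and a.e. $t$. *)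

theory Defs
  imports "HOL-Analysis.Analysis"
begin

coinductive smooth_fun :: "('a::real_normed_vector \<Rightarrow> real) \<Rightarrow> bool" where
  "(\<forall>x. f differentiable (at x)) \<Longrightarrow>
   (\<forall>v. smooth_fun (\<lambda>x. frechet_derivative f (at x) v)) \<Longrightarrow> smooth_fun f"

definition test_fun :: "'a::euclidean_space set \<Rightarrow> ('a \<Rightarrow> real) \<Rightarrow> bool" where
  "test_fun \<Omega> \<phi> \<longleftrightarrow> smooth_fun \<phi> \<and>
     (\<exists>K. compact K \<and> K \<subseteq> \<Omega> \<and> (\<forall>x. x \<notin> K \<longrightarrow> \<phi> x = 0))"

text \<open>C_c^infinity([0,T) x Omega): (restrictions to [0,T) x Omega of) smooth functions on
  R x R^d vanishing outside a compact subset of (-infinity,T) x Omega.\<close>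
definition test_fun_T :: "real \<Rightarrow> 'a::euclidean_space set \<Rightarrow> (real \<times> 'a \<Rightarrow> real) \<Rightarrow> bool" where
  "test_fun_T T \<Omega> \<phi> \<longleftrightarrow> smooth_fun \<phi> \<and>
     (\<exists>K. compact K \<and> K \<subseteq> {..<T} \<times> \<Omega> \<and> (\<forall>z. z \<notin> K \<longrightarrow> \<phi> z = 0))"

definition grad :: "('a::euclidean_space \<Rightarrow> real) \<Rightarrow> 'a \<Rightarrow> 'a" where
  "grad \<phi> x = (\<Sum>b\<in>Basis. frechet_derivative \<phi> (at x) b *\<^sub>R b)"

definition grad_x :: "(real \<times> 'a::euclidean_space \<Rightarrow> real) \<Rightarrow> real \<times> 'a \<Rightarrow> 'a" where
  "grad_x \<phi> z = (\<Sum>b\<in>Basis. frechet_derivative \<phi> (at z) (0, b) *\<^sub>R b)"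

definition dt :: "(real \<times> 'a::euclidean_space \<Rightarrow> real) \<Rightarrow> real \<times> 'a \<Rightarrow> real" where
  "dt \<phi> z = frechet_derivative \<phi> (at z) (1, 0)"

definition W1inf_norm :: "('a::euclidean_space \<Rightarrow> real) \<Rightarrow> real" where
  "W1inf_norm \<psi> = (SUP x. \<bar>\<psi> x\<bar>) + (SUP x. norm (grad \<psi> x))"

definition weak_grad :: "'a::euclidean_space set \<Rightarrow> ('a \<Rightarrow> real) \<Rightarrow> ('a \<Rightarrow> 'a) \<Rightarrow> bool" where
  "weak_grad \<Omega> v G \<longleftrightarrow> set_integrable lebesgue \<Omega> v \<and> set_integrable lebesgue \<Omega> G \<and>
     (\<forall>\<phi>. test_fun \<Omega> \<phi> \<longrightarrow>
        (LINT x:\<Omega>|lebesgue. v x *\<^sub>R grad \<phi> x) = - (LINT x:\<Omega>|lebesgue. \<phi> x *\<^sub>R G x))"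

definition W011 :: "'a::euclidean_space set \<Rightarrow> ('a \<Rightarrow> real) \<Rightarrow> ('a \<Rightarrow> 'a) \<Rightarrow> bool" where
  "W011 \<Omega> v G \<longleftrightarrow> weak_grad \<Omega> v G \<and>
     (\<exists>\<phi>::nat \<Rightarrow> 'a \<Rightarrow> real. (\<forall>j. test_fun \<Omega> (\<phi> j)) \<and>
        ((\<lambda>j. (LINT x:\<Omega>|lebesgue. \<bar>\<phi> j x - v x\<bar>) + (LINT x:\<Omega>|lebesgue. norm (grad (\<phi> j) x - G x)))
           \<longlonglongrightarrow> 0))"

text \<open>Variable exponent Lebesgue space L^{q(z)}(S) (q bounded): measurable with finite modular.\<close>
definition var_Lp :: "('b::euclidean_space) set \<Rightarrow> ('b \<Rightarrow> real) \<Rightarrow> ('b \<Rightarrow> 'c::real_normed_vector) \<Rightarrow> bool" where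
  "var_Lp S q g \<longleftrightarrow> g \<in> borel_measurable (lebesgue_on S) \<and>
     (\<integral>\<^sup>+ z\<in>S. ennreal (norm (g z) powr q z) \<partial>lebesgue) < \<infinity>"

definition Linf :: "('b::euclidean_space) set \<Rightarrow> ('b \<Rightarrow> real) \<Rightarrow> bool" where
  "Linf S g \<longleftrightarrow> g \<in> borel_measurable (lebesgue_on S) \<and>
     (\<exists>M. AE z in lebesgue. z \<in> S \<longrightarrow> \<bar>g z\<bar> \<le> M)"

text \<open>Bounded Lipschitz domain: open, bounded, locally the region below a Lipschitz graph.\<close>
definition bounded_lipschitz_domain :: "'a::euclidean_space set \<Rightarrow> bool" where
  "bounded_lipschitz_domain \<Omega> \<longleftrightarrow> open \<Omega> \<and> bounded \<Omega> \<and>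
     (\<forall>z\<in>frontier \<Omega>. \<exists>r>0. \<exists>e::'a. \<exists>g::'a \<Rightarrow> real. \<exists>L.
        norm e = 1 \<and> L-lipschitz_on UNIV g \<and> (\<forall>y. g y = g (y - (y \<bullet> e) *\<^sub>R e)) \<and>
        \<Omega> \<inter> ball z r = {y \<in> ball z r. y \<bullet> e < g y})"

definition OmegaT :: "real \<Rightarrow> 'a set \<Rightarrow> (real \<times> 'a) set" where
  "OmegaT T \<Omega> = {0<..<T} \<times> \<Omega>"

definition conj_exp :: "real \<Rightarrow> real" where
  "conj_exp q = q / (q - 1)"

text \<open>Standing assumptions: Omega, T, p (log-Hoelder in space uniformly in time, bounded
  away from 1 and infinity) and A satisfying (A1)-(A4) with constant c and h in L-infinity.\<close>
definition standing_setting ::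
  "'a::euclidean_space set \<Rightarrow> real \<Rightarrow> (real \<times> 'a \<Rightarrow> real) \<Rightarrow> (real \<times> 'a \<Rightarrow> 'a \<Rightarrow> 'a) \<Rightarrow> bool" where
  "standing_setting \<Omega> T p A \<longleftrightarrow>
     bounded_lipschitz_domain \<Omega> \<and> T > 0 \<and>
     p \<in> borel_measurable (lebesgue_on (OmegaT T \<Omega>)) \<and>
     (\<exists>pmin pmax. 1 < pmin \<and> (\<forall>z\<in>OmegaT T \<Omega>. pmin \<le> p z \<and> p z \<le> pmax)) \<and>
     (\<exists>L. \<forall>t x y. t \<in> {0<..<T} \<longrightarrow> x \<in> \<Omega> \<longrightarrow> y \<in> \<Omega> \<longrightarrow> x \<noteq> y \<longrightarrow>
        \<bar>p (t, x) - p (t, y)\<bar> \<le> L / ln (exp 1 + 1 / dist x y)) \<and>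
     \<comment> \<open>(A1) Caratheodory\<close>
     (\<forall>\<xi>. (\<lambda>z. A z \<xi>) \<in> borel_measurable (lebesgue_on (OmegaT T \<Omega>))) \<and>
     (AE z in lebesgue. z \<in> OmegaT T \<Omega> \<longrightarrow> continuous_on UNIV (A z)) \<and>
     \<comment> \<open>(A2) coercivity / growth\<close>
     (\<exists>c h. c > 0 \<and> Linf (OmegaT T \<Omega>) h \<and>
        (AE z in lebesgue. z \<in> OmegaT T \<Omega> \<longrightarrow>
           (\<forall>\<xi>. norm \<xi> powr p z + norm (A z \<xi>) powr conj_exp (p z) \<le> c * (A z \<xi> \<bullet> \<xi>) + h z))) \<and>
     \<comment> \<open>(A3) monotonicity\<close>
     (AE z in lebesgue. z \<in> OmegaT T \<Omega> \<longrightarrow> (\<forall>\<xi> \<eta>. (A z \<xi> - A z \<eta>) \<bullet> (\<xi> - \<eta>) \<ge> 0)) \<and>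
     \<comment> \<open>(A4)\<close>
     (AE z in lebesgue. z \<in> OmegaT T \<Omega> \<longrightarrow> A z 0 = 0)"

definition trunc :: "real \<Rightarrow> real \<Rightarrow> real" where
  "trunc k z = (if \<bar>z\<bar> \<le> k then z else k * sgn z)"

definition Gk :: "real \<Rightarrow> real \<Rightarrow> real" where
  "Gk k s = (LBINT r=0..ereal s. trunc k r)"

text \<open>Admissible smoothed truncations T_{k,eps}, with a fixed constant Cs in the bound
  on the second derivative.\<close>
definition smoothed_trunc :: "real \<Rightarrow> real \<Rightarrow> real \<Rightarrow> (real \<Rightarrow> real) set" where
  "smoothed_trunc Cs k \<epsilon> = {Tf.
     (\<forall>z. Tf differentiable (at z)) \<and> (\<forall>z. deriv Tf differentiable (at z)) \<and>
     continuous_on UNIV (deriv (deriv Tf)) \<and>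
     (\<forall>z. \<bar>z\<bar> \<le> k \<longrightarrow> Tf z = z) \<and>
     (\<forall>z. \<bar>z\<bar> \<ge> k + \<epsilon> \<longrightarrow> Tf z = sgn z * (k + \<epsilon> / 2)) \<and>
     (\<forall>z. 0 \<le> deriv Tf z \<and> deriv Tf z \<le> 1) \<and>
     concave_on {0..} Tf \<and> convex_on {..0} Tf \<and>
     (\<forall>z. \<bar>deriv (deriv Tf) z\<bar> \<le> Cs / \<epsilon>)}"

definition approx_setting ::
  "'a::euclidean_space set \<Rightarrow> real \<Rightarrow> (real \<times> 'a \<Rightarrow> real) \<Rightarrow> (real \<times> 'a \<Rightarrow> 'a \<Rightarrow> 'a) \<Rightarrow>
   (nat \<Rightarrow> real \<times> 'a \<Rightarrow> real) \<Rightarrow> (nat \<Rightarrow> 'a \<Rightarrow> real) \<Rightarrow>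
   (nat \<Rightarrow> real \<times> 'a \<Rightarrow> real) \<Rightarrow> (nat \<Rightarrow> real \<times> 'a \<Rightarrow> 'a) \<Rightarrow> bool" where
  "approx_setting \<Omega> T p A f u0 u Du \<longleftrightarrow>
     (\<forall>n. Linf (OmegaT T \<Omega>) (f n) \<and> Linf \<Omega> (u0 n)) \<and>
     (\<exists>B. \<forall>n. (\<integral>\<^sup>+ x\<in>\<Omega>. ennreal \<bar>u0 n x\<bar> \<partial>lebesgue) +
               (\<integral>\<^sup>+ z\<in>OmegaT T \<Omega>. ennreal \<bar>f n z\<bar> \<partial>lebesgue) \<le> ennreal B) \<and>
     (\<forall>n.
       \<comment> \<open>u^n in L^1(0,T;W^{1,1}_0(Omega)), Du^n its spatial weak gradient\<close>
       set_integrable lebesgue (OmegaT T \<Omega>) (u n) \<and>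
       set_integrable lebesgue (OmegaT T \<Omega>) (Du n) \<and>
       (AE t in lebesgue. t \<in> {0<..<T} \<longrightarrow> W011 \<Omega> (\<lambda>x. u n (t, x)) (\<lambda>x. Du n (t, x))) \<and>
       \<comment> \<open>u^n in L^infinity(0,T;L^2(Omega))\<close>
       (\<exists>M. AE t in lebesgue. t \<in> {0<..<T} \<longrightarrow>
          (\<integral>\<^sup>+ x\<in>\<Omega>. ennreal ((u n (t, x))\<^sup>2) \<partial>lebesgue) \<le> ennreal M) \<and>
       var_Lp (OmegaT T \<Omega>) p (Du n) \<and>
       var_Lp (OmegaT T \<Omega>) (\<lambda>z. conj_exp (p z)) (\<lambda>z. A z (Du n z)) \<and>
       \<comment> \<open>weak formulation\<close>
       (\<forall>\<phi>. test_fun_T T \<Omega> \<phi> \<longrightarrow>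
          - (LINT z:OmegaT T \<Omega>|lebesgue. u n z * dt \<phi> z)
          - (LINT x:\<Omega>|lebesgue. u0 n x * \<phi> (0, x))
          + (LINT z:OmegaT T \<Omega>|lebesgue. A z (Du n z) \<bullet> grad_x \<phi> z)
          = (LINT z:OmegaT T \<Omega>|lebesgue. f n z * \<phi> z)) \<and>
       \<comment> \<open>energy equality; grad T_k(u) = 1_{|u|<k} grad u\<close>
       (\<forall>k>0. AE t in lebesgue. t \<in> {0<..<T} \<longrightarrow>
          (LINT x:\<Omega>|lebesgue. Gk k (u n (t, x)) - Gk k (u0 n x))
          = - (LINT z:{0<..<t} \<times> \<Omega>|lebesgue.
                  A z (Du n z) \<bullet> (if \<bar>u n z\<bar> < k then Du n z else 0))
            + (LINT z:{0<..<t} \<times> \<Omega>|lebesgue. f n z * trunc k (u n z))))"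

end

theory Submission
  imports Defs
begin

text \<open>The second derivative of \<open>T\<^sub>k\<^sub>,\<^sub>\<epsilon>\<close> is bounded by \<open>Cs/\<epsilon>\<close> and vanishes unless
  \<open>k \<le> |u| \<le> k + \<epsilon>\<close>, so the integrand is at most \<open>(Cs/\<epsilon>) sup |\<psi>|\<close> times \<open>A(\<nabla>u)\<cdot>\<nabla>u\<close> on the
  slab \<open>k \<le> |u| < k + 2\<epsilon>\<close>. Subtracting the energy equalities at the levels \<open>a = k\<close> and
  \<open>b = k + 2\<epsilon>\<close>, and using \<open>0 \<le> G\<^sub>b - G\<^sub>a \<le> (b - a)|s|\<close> and \<open>|T\<^sub>b - T\<^sub>a| \<le> b - a\<close>, bounds the
  integral of \<open>A(\<nabla>u)\<cdot>\<nabla>u\<close> over \<open>a \<le> |u| < b\<close> up to any time \<open>t\<close> by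
  \<open>(b - a)(\<parallel>u\<^sub>0\<parallel>\<^sub>1 + \<parallel>f\<parallel>\<^sub>1)\<close>, so the factor \<open>\<epsilon>\<close> cancels. The energy equality holds only for
  almost every \<open>t\<close>; the bound on \<open>\<Omega>\<^sub>T\<close> follows by monotone convergence along such times.\<close>

section \<open>Truncations\<close>

lemma trunc_eq_clamp: "0 \<le> k \<Longrightarrow> trunc k r = max (-k) (min k r)"
  by (auto simp: trunc_def sgn_if)

lemma continuous_on_trunc:
  assumes "0 \<le> k"
  shows "continuous_on S (trunc k)"
proof -
  have "trunc k = (\<lambda>r. max (-k) (min k r))"
    using trunc_eq_clamp[OF assms] by auto
  then show ?thesis
    by (simp add: continuous_intros)
qed

lemma borel_measurable_trunc [measurable]: "0 \<le> k \<Longrightarrow> trunc k \<in> borel_measurable borel"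
  by (intro borel_measurable_continuous_onI continuous_on_trunc)

lemma abs_trunc_le: "0 \<le> k \<Longrightarrow> \<bar>trunc k s\<bar> \<le> k"
  by (auto simp: trunc_eq_clamp)

lemma abs_trunc_diff_le: "0 \<le> a \<Longrightarrow> a \<le> b \<Longrightarrow> \<bar>trunc b s - trunc a s\<bar> \<le> b - a"
  by (auto simp: trunc_eq_clamp)

lemma Gk_zero [simp]: "Gk k 0 = 0"
  by (simp add: Gk_def zero_ereal_def)

lemma has_real_derivative_Gk:
  assumes "0 \<le> k"
  shows "(Gk k has_real_derivative trunc k x) (at x)"
proof -
  define m where "m = \<bar>x\<bar> + 1"
  have "((\<lambda>s. LBINT r=ereal 0..ereal s. trunc k r) has_vector_derivative trunc k x)
      (at x within {-m..m})"
    using interval_integral_FTC2[of "-m" 0 m "trunc k" x] assms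
    by (auto simp: m_def continuous_on_trunc)
  then have "((\<lambda>s. LBINT r=0..ereal s. trunc k r) has_vector_derivative trunc k x)
      (at x within {-m..m})"
    by (simp add: zero_ereal_def)
  then have "(Gk k has_vector_derivative trunc k x) (at x within {-m..m})"
    unfolding Gk_def[abs_def] .
  moreover have "x \<in> interior {-m..m}"
    by (auto simp: m_def)
  ultimately have "(Gk k has_vector_derivative trunc k x) (at x)"
    by (metis at_within_interior)
  then show ?thesis
    by (simp add: has_real_derivative_iff_has_vector_derivative)
qed

lemma continuous_on_Gk: "0 \<le> k \<Longrightarrow> continuous_on S (Gk k)"
  using has_real_derivative_Gk by (meson DERIV_isCont continuous_at_imp_continuous_on)

lemma borel_measurable_Gk [measurable]: "0 \<le> k \<Longrightarrow> Gk k \<in> borel_measurable borel"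
  by (intro borel_measurable_continuous_onI continuous_on_Gk)

lemma zero_le_le_mult_abs_of_deriv_sign:
  fixes D d :: "real \<Rightarrow> real"
  assumes D0: "D 0 = 0" and der: "\<And>x. (D has_real_derivative d x) (at x)"
    and pos: "\<And>x. 0 \<le> x \<Longrightarrow> 0 \<le> d x \<and> d x \<le> L"
    and neg: "\<And>x. x \<le> 0 \<Longrightarrow> -L \<le> d x \<and> d x \<le> 0"
  shows "0 \<le> D s \<and> D s \<le> L * \<bar>s\<bar>"
proof (cases "0 \<le> s")
  case True
  obtain z where "0 \<le> z" "D s = s * d z"
  proof (cases "s = 0")
    case False
    then obtain z where "0 < z" "D s - D 0 = (s - 0) * d z"
      using MVT2[of 0 s D d] der True by auto
    then show ?thesis
      using that[of z] D0 by simp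
  qed (use that[of 0] D0 in simp)
  then show ?thesis
    using pos[of z] True mult_left_mono[of "d z" L s] by (simp add: mult.commute)
next
  case False
  then obtain z where "z < 0" "D 0 - D s = (0 - s) * d z"
    using MVT2[of s 0 D d] der by auto
  then show ?thesis
    using neg[of z] False D0 mult_left_mono[of "- d z" L "- s"] by (simp add: mult_nonpos_nonpos mult.commute)
qed

lemma Gk_diff_bounds:
  assumes "0 \<le> a" "a \<le> b"
  shows "0 \<le> Gk b s - Gk a s \<and> Gk b s - Gk a s \<le> (b - a) * \<bar>s\<bar>"
proof (rule zero_le_le_mult_abs_of_deriv_sign[where d = "\<lambda>x. trunc b x - trunc a x"])
  fix x
  show "((\<lambda>s. Gk b s - Gk a s) has_real_derivative trunc b x - trunc a x) (at x)"
    using assms by (intro derivative_intros has_real_derivative_Gk) auto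
  show "0 \<le> x \<Longrightarrow> 0 \<le> trunc b x - trunc a x \<and> trunc b x - trunc a x \<le> b - a"
    and "x \<le> 0 \<Longrightarrow> -(b - a) \<le> trunc b x - trunc a x \<and> trunc b x - trunc a x \<le> 0"
    using assms by (auto simp: trunc_eq_clamp)
qed simp

lemma abs_Gk_le:
  assumes "0 \<le> k"
  shows "\<bar>Gk k s\<bar> \<le> k * \<bar>s\<bar>"
proof -
  have "trunc 0 = (\<lambda>r. 0)"
    by (auto simp: trunc_def)
  then have "Gk 0 s = 0"
    by (simp add: Gk_def)
  then show ?thesis
    using Gk_diff_bounds[of 0 k s] assms by simp
qed

section \<open>Smoothed truncations and test functions\<close>

lemma smoothed_trunc_deriv2_eq_0:
  assumes Tf: "Tf \<in> smoothed_trunc Cs k \<epsilon>" and "0 \<le> k" "0 < \<epsilon>"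
    and z: "\<bar>z\<bar> < k \<or> k + \<epsilon> < \<bar>z\<bar>"
  shows "deriv (deriv Tf) z = 0"
proof -
  have deriv2_locally_eq: "deriv (deriv Tf) z = deriv (deriv g) z"
    if "open S" "z \<in> S" "\<And>y. y \<in> S \<Longrightarrow> Tf y = g y" for S g
  proof -
    have "\<forall>\<^sub>F y in nhds z. Tf y = g y"
      using eventually_nhds_in_open[OF that(1,2)] by eventually_elim (use that(3) in auto)
    then have "(deriv ^^ 2) Tf z = (deriv ^^ 2) g z"
      by (rule higher_deriv_cong_ev) simp
    then show ?thesis
      by (simp add: numeral_2_eq_2)
  qed
  have inner: "\<And>y. \<bar>y\<bar> \<le> k \<Longrightarrow> Tf y = y"
    and outer: "\<And>y. k + \<epsilon> \<le> \<bar>y\<bar> \<Longrightarrow> Tf y = sgn y * (k + \<epsilon> / 2)"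
    using Tf by (auto simp: smoothed_trunc_def)
  consider "\<bar>z\<bar> < k" | "k + \<epsilon> < z" | "z < -(k + \<epsilon>)"
    using z by linarith
  then show ?thesis
  proof cases
    case 1
    have "deriv (deriv Tf) z = deriv (deriv (\<lambda>y. y)) z"
      by (rule deriv2_locally_eq[of "{-k<..<k}"]) (use 1 inner in auto)
    then show ?thesis
      by simp
  next
    case 2
    have "deriv (deriv Tf) z = deriv (deriv (\<lambda>y. k + \<epsilon> / 2)) z"
      by (rule deriv2_locally_eq[of "{k + \<epsilon><..}"]) (use 2 outer assms(2,3) in auto)
    then show ?thesis
      by simp
  next
    case 3
    have "deriv (deriv Tf) z = deriv (deriv (\<lambda>y. -(k + \<epsilon> / 2))) z"
      by (rule deriv2_locally_eq[of "{..<-(k + \<epsilon>)}"]) (use 3 outer assms(2,3) in auto)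
    then show ?thesis
      by simp
  qed
qed

lemma bounded_continuous_vanishing_outside_compact:
  fixes g :: "'a::metric_space \<Rightarrow> 'b::real_normed_vector"
  assumes "continuous_on UNIV g" "compact K" "\<And>x. x \<notin> K \<Longrightarrow> g x = 0"
  shows "bounded (range g)"
proof -
  have "compact (g ` K)"
    using assms(1,2) by (meson compact_continuous_image continuous_on_subset subset_UNIV)
  then have "bounded (insert 0 (g ` K))"
    by (simp add: compact_imp_bounded)
  moreover have "range g \<subseteq> insert 0 (g ` K)"
    using assms(3) by blast
  ultimately show ?thesis
    using bounded_subset by blast
qed

lemma abs_le_W1inf_norm:
  assumes "test_fun \<Omega> \<psi>"
  shows "\<bar>\<psi> x\<bar> \<le> W1inf_norm \<psi>"
proof -
  obtain K where K: "compact K" "\<And>x. x \<notin> K \<Longrightarrow> \<psi> x = 0" and smooth: "smooth_fun \<psi>"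
    using assms unfolding test_fun_def by blast
  have smooth_deriv: "\<And>v. smooth_fun (\<lambda>x. frechet_derivative \<psi> (at x) v)"
    using smooth by (auto elim: smooth_fun.cases)
  have continuous_smooth: "continuous_on UNIV \<phi>" if "smooth_fun \<phi>" for \<phi> :: "'a \<Rightarrow> real"
    using that by (auto elim!: smooth_fun.cases
        intro: continuous_at_imp_continuous_on differentiable_imp_continuous_within)
  have grad_vanishes: "grad \<psi> x = 0" if "x \<notin> K" for x
  proof -
    have "((\<lambda>y. 0) has_derivative (\<lambda>h. 0)) (at x)"
      by simp
    then have "(\<psi> has_derivative (\<lambda>h. 0)) (at x)"
      by (rule has_derivative_transform_within_open[of _ _ _ _ "- K"])
        (use that K compact_imp_closed in auto)
    then show ?thesis
      by (simp add: grad_def frechet_derivative_at[symmetric])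
  qed
  txt \<open>Boundedness of the gradient is needed only because an unbounded \<open>SUP\<close> is a junk value
    that could be negative.\<close>
  have "continuous_on UNIV (grad \<psi>)"
    unfolding grad_def[abs_def] by (intro continuous_intros continuous_smooth smooth_deriv)
  then have "bounded (range (grad \<psi>))"
    using K(1) grad_vanishes by (rule bounded_continuous_vanishing_outside_compact)
  then obtain B' where "\<And>x. norm (grad \<psi> x) \<le> B'"
    by (auto simp: bounded_iff)
  then have "0 \<le> (SUP x. norm (grad \<psi> x))"
    by (intro cSUP_upper2[of _ _ x] bdd_aboveI2) auto
  moreover have "bounded (range \<psi>)"
    using continuous_smooth[OF smooth] K by (rule bounded_continuous_vanishing_outside_compact)
  then obtain B where "\<And>x. \<bar>\<psi> x\<bar> \<le> B"
    by (auto simp: bounded_iff)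
  then have "\<bar>\<psi> x\<bar> \<le> (SUP x. \<bar>\<psi> x\<bar>)"
    by (intro cSUP_upper bdd_aboveI2) auto
  ultimately show ?thesis
    by (simp add: W1inf_norm_def)
qed

lemma sets_lebesgue_open: "open S \<Longrightarrow> S \<in> sets lebesgue"
  by (metis borel_open sets_completionI_sets sets_lborel)

lemma set_integrable_iff_integrable_lebesgue_on:
  fixes f :: "'a::euclidean_space \<Rightarrow> 'b::{banach, second_countable_topology}"
  assumes "S \<in> sets lebesgue"
  shows "set_integrable lebesgue S f \<longleftrightarrow> integrable (lebesgue_on S) f"
  unfolding set_integrable_def using assms by (subst integrable_restrict_space) auto

lemma set_integral_eq_integral_lebesgue_on:
  fixes f :: "'a::euclidean_space \<Rightarrow> 'b::{banach, second_countable_topology}"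
  assumes "S \<in> sets lebesgue"
  shows "(LINT x:S|lebesgue. f x) = integral\<^sup>L (lebesgue_on S) f"
  unfolding set_lebesgue_integral_def using assms by (subst integral_restrict_space) auto

lemma set_nn_integral_eq_nn_integral_lebesgue_on:
  assumes "S \<in> sets lebesgue"
  shows "(\<integral>\<^sup>+ x\<in>S. f x \<partial>lebesgue) = (\<integral>\<^sup>+ x. f x \<partial>lebesgue_on S)"
  using assms by (subst nn_integral_restrict_space) auto

lemma integrable_lebesgue_on_subset:
  fixes f :: "'a::euclidean_space \<Rightarrow> 'b::{banach, second_countable_topology}"
  assumes "S \<in> sets lebesgue" "U \<in> sets lebesgue" "S \<subseteq> U" "integrable (lebesgue_on U) f"
  shows "integrable (lebesgue_on S) f"
  using assms set_integrable_subset[of lebesgue U f S]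
  by (simp add: set_integrable_iff_integrable_lebesgue_on)

lemma integral_lebesgue_on_subset_le:
  fixes f :: "'a::euclidean_space \<Rightarrow> real"
  assumes S: "S \<in> sets lebesgue" and U: "U \<in> sets lebesgue" and "S \<subseteq> U"
    and f: "integrable (lebesgue_on U) f" and nonneg: "\<And>x. 0 \<le> f x"
  shows "integral\<^sup>L (lebesgue_on S) f \<le> integral\<^sup>L (lebesgue_on U) f"
proof -
  have "set_integrable lebesgue U f" "set_integrable lebesgue S f"
    using integrable_lebesgue_on_subset[OF assms(1-4)] f S U
    by (auto simp: set_integrable_iff_integrable_lebesgue_on)
  then show ?thesis
    using \<open>S \<subseteq> U\<close> nonneg
    unfolding set_integral_eq_integral_lebesgue_on[OF S, symmetric]
      set_integral_eq_integral_lebesgue_on[OF U, symmetric]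
      set_lebesgue_integral_def set_integrable_def
    by (intro integral_mono) (auto simp: indicator_def)
qed

lemma set_nn_integral_lebesgue_on_subset:
  assumes S: "S \<in> sets lebesgue" and U: "U \<in> sets lebesgue" and "S \<subseteq> U"
  shows "(\<integral>\<^sup>+ z\<in>S. h z \<partial>lebesgue_on U) = (\<integral>\<^sup>+ z. h z \<partial>lebesgue_on S)"
proof -
  have "(\<integral>\<^sup>+ z\<in>S. h z \<partial>lebesgue_on U) = (\<integral>\<^sup>+ z\<in>S. h z \<partial>lebesgue)"
    using \<open>S \<subseteq> U\<close> unfolding set_nn_integral_eq_nn_integral_lebesgue_on[OF U, symmetric]
    by (intro nn_integral_cong) (auto split: split_indicator)
  also have "\<dots> = (\<integral>\<^sup>+ z. h z \<partial>lebesgue_on S)"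
    by (rule set_nn_integral_eq_nn_integral_lebesgue_on[OF S])
  finally show ?thesis .
qed

lemma Youngs_inequality_conj_exp:
  fixes a b q :: real
  assumes "1 < q" "0 \<le> a" "0 \<le> b"
  shows "a * b \<le> a powr q + b powr conj_exp q"
proof -
  have q': "1 < conj_exp q" "1 / q + 1 / conj_exp q = 1"
    using assms(1) by (auto simp: conj_exp_def field_simps)
  have "a * b \<le> a powr q / q + b powr conj_exp q / conj_exp q"
    using Youngs_inequality[OF assms(1) q' assms(2,3)] .
  also have "\<dots> \<le> a powr q + b powr conj_exp q"
    using assms(1) q'(1) by (intro add_mono) (auto simp: divide_le_eq mult_le_cancel_left1)
  finally show ?thesis .
qed

lemma integrable_inner_of_var_Lp:
  fixes S :: "'b::euclidean_space set" and p :: "'b \<Rightarrow> real"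
    and D G :: "'b \<Rightarrow> 'c::euclidean_space"
  assumes S: "S \<in> sets lebesgue" and p_gt_1: "\<And>z. z \<in> S \<Longrightarrow> 1 < p z"
    and [measurable]: "p \<in> borel_measurable (lebesgue_on S)"
    and D: "var_Lp S p D" and G: "var_Lp S (\<lambda>z. conj_exp (p z)) G"
  shows "integrable (lebesgue_on S) (\<lambda>z. G z \<bullet> D z)"
  unfolding integrable_iff_bounded
proof
  let ?L = "lebesgue_on S"
  have [measurable]: "D \<in> borel_measurable ?L" "G \<in> borel_measurable ?L"
    and finite: "(\<integral>\<^sup>+ z. ennreal (norm (D z) powr p z) \<partial>?L) < \<infinity>"
      "(\<integral>\<^sup>+ z. ennreal (norm (G z) powr conj_exp (p z)) \<partial>?L) < \<infinity>"
    using D G unfolding var_Lp_def set_nn_integral_eq_nn_integral_lebesgue_on[OF S] by auto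
  show "(\<lambda>z. G z \<bullet> D z) \<in> borel_measurable ?L"
    by measurable
  have [measurable]: "(\<lambda>z. conj_exp (p z)) \<in> borel_measurable ?L"
    unfolding conj_exp_def by measurable
  have "(\<integral>\<^sup>+ z. ennreal (norm (G z \<bullet> D z)) \<partial>?L) \<le>
      (\<integral>\<^sup>+ z. ennreal (norm (D z) powr p z) + ennreal (norm (G z) powr conj_exp (p z)) \<partial>?L)"
  proof (rule nn_integral_mono)
    fix z assume "z \<in> space ?L"
    then have "1 < p z"
      by (simp add: p_gt_1)
    have "norm (G z \<bullet> D z) \<le> norm (D z) * norm (G z)"
      by (metis Cauchy_Schwarz_ineq2 mult.commute real_norm_def)
    also have "\<dots> \<le> norm (D z) powr p z + norm (G z) powr conj_exp (p z)"
      using \<open>1 < p z\<close> by (intro Youngs_inequality_conj_exp) auto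
    finally show "ennreal (norm (G z \<bullet> D z))
        \<le> ennreal (norm (D z) powr p z) + ennreal (norm (G z) powr conj_exp (p z))"
      by (simp flip: ennreal_plus)
  qed
  also have "\<dots> = (\<integral>\<^sup>+ z. ennreal (norm (D z) powr p z) \<partial>?L)
      + (\<integral>\<^sup>+ z. ennreal (norm (G z) powr conj_exp (p z)) \<partial>?L)"
    by (rule nn_integral_add) measurable
  also have "\<dots> < \<infinity>"
    using finite by simp
  finally show "(\<integral>\<^sup>+ z. ennreal (norm (G z \<bullet> D z)) \<partial>?L) < \<infinity>" .
qed

lemma integrable_mult_trunc:
  fixes f u :: "'b \<Rightarrow> real"
  assumes f: "integrable M f" and [measurable]: "u \<in> borel_measurable M" and "0 \<le> k"
  shows "integrable M (\<lambda>z. f z * trunc k (u z))"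
proof (rule Bochner_Integration.integrable_bound)
  show "integrable M (\<lambda>z. k * f z)"
    using f by simp
  have [measurable]: "f \<in> borel_measurable M"
    using f by simp
  show "(\<lambda>z. f z * trunc k (u z)) \<in> borel_measurable M"
    using \<open>0 \<le> k\<close> by measurable
  have "\<bar>f z\<bar> * \<bar>trunc k (u z)\<bar> \<le> \<bar>f z\<bar> * k" for z
    using abs_trunc_le[OF \<open>0 \<le> k\<close>] by (rule mult_left_mono) simp
  then show "AE z in M. norm (f z * trunc k (u z)) \<le> norm (k * f z)"
    using \<open>0 \<le> k\<close> by (simp add: abs_mult mult.commute)
qed

lemma integrable_Gk:
  fixes v :: "'b \<Rightarrow> real"
  assumes v: "integrable M v" and "0 \<le> k"
  shows "integrable M (\<lambda>x. Gk k (v x))"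
proof (rule Bochner_Integration.integrable_bound)
  show "integrable M (\<lambda>x. k * v x)"
    using v by simp
  show "(\<lambda>x. Gk k (v x)) \<in> borel_measurable M"
    using assms by (intro measurable_compose[OF _ borel_measurable_Gk]) auto
  show "AE x in M. norm (Gk k (v x)) \<le> norm (k * v x)"
    using abs_Gk_le[OF \<open>0 \<le> k\<close>] \<open>0 \<le> k\<close> by (auto simp: abs_mult)
qed

section \<open>The slab estimate\<close>

lemma integral_mult_trunc_diff_le:
  fixes f u :: "'b \<Rightarrow> real"
  assumes f: "integrable M f" and u: "u \<in> borel_measurable M" and ab: "0 \<le> a" "a \<le> b"
  shows "(\<integral>z. f z * trunc b (u z) \<partial>M) - (\<integral>z. f z * trunc a (u z) \<partial>M)
    \<le> (b - a) * (\<integral>z. \<bar>f z\<bar> \<partial>M)"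
proof -
  have int: "integrable M (\<lambda>z. f z * trunc k (u z))" if "0 \<le> k" for k
    using f u that by (rule integrable_mult_trunc)
  have "(\<integral>z. f z * trunc b (u z) \<partial>M) - (\<integral>z. f z * trunc a (u z) \<partial>M)
      = (\<integral>z. f z * trunc b (u z) - f z * trunc a (u z) \<partial>M)"
    using int ab by simp
  also have "\<dots> \<le> (\<integral>z. (b - a) * \<bar>f z\<bar> \<partial>M)"
  proof (rule integral_mono)
    show "integrable M (\<lambda>z. f z * trunc b (u z) - f z * trunc a (u z))"
      using int ab by simp
    show "integrable M (\<lambda>z. (b - a) * \<bar>f z\<bar>)"
      using f by simp
    fix z
    have "f z * (trunc b (u z) - trunc a (u z)) \<le> \<bar>f z\<bar> * \<bar>trunc b (u z) - trunc a (u z)\<bar>"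
      by (metis abs_ge_self abs_mult)
    also have "\<dots> \<le> \<bar>f z\<bar> * (b - a)"
      using abs_trunc_diff_le[OF ab] by (rule mult_left_mono) simp
    finally show "f z * trunc b (u z) - f z * trunc a (u z) \<le> (b - a) * \<bar>f z\<bar>"
      by (simp add: algebra_simps)
  qed
  finally show ?thesis
    by simp
qed

lemma integral_Gk_diff_le:
  fixes v w :: "'b \<Rightarrow> real"
  assumes v: "integrable M v" and w: "integrable M w" and ab: "0 \<le> a" "a \<le> b"
  shows "(\<integral>x. Gk a (v x) - Gk a (w x) \<partial>M) - (\<integral>x. Gk b (v x) - Gk b (w x) \<partial>M)
    \<le> (b - a) * (\<integral>x. \<bar>w x\<bar> \<partial>M)"
proof -
  have int: "integrable M (\<lambda>x. Gk k (v x))" "integrable M (\<lambda>x. Gk k (w x))" if "0 \<le> k" for k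
    using integrable_Gk[OF v that] integrable_Gk[OF w that] by auto
  have "(\<integral>x. Gk a (v x) - Gk a (w x) \<partial>M) - (\<integral>x. Gk b (v x) - Gk b (w x) \<partial>M)
      = (\<integral>x. (Gk b (w x) - Gk a (w x)) - (Gk b (v x) - Gk a (v x)) \<partial>M)"
    using int ab by (simp add: algebra_simps)
  also have "\<dots> \<le> (\<integral>x. (b - a) * \<bar>w x\<bar> \<partial>M)"
  proof (rule integral_mono)
    show "integrable M (\<lambda>x. (Gk b (w x) - Gk a (w x)) - (Gk b (v x) - Gk a (v x)))"
      using int ab by simp
    show "integrable M (\<lambda>x. (b - a) * \<bar>w x\<bar>)"
      using w by simp
    fix x
    show "(Gk b (w x) - Gk a (w x)) - (Gk b (v x) - Gk a (v x)) \<le> (b - a) * \<bar>w x\<bar>"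
      using Gk_diff_bounds[OF ab, of "w x"] Gk_diff_bounds[OF ab, of "v x"] by linarith
  qed
  finally show ?thesis
    by simp
qed

lemma slab_integral_le_of_energy_identity:
  fixes g u f :: "'b \<Rightarrow> real" and v w :: "'c \<Rightarrow> real"
  assumes g: "integrable M g" and u [measurable]: "u \<in> borel_measurable M"
    and f: "integrable M f" and v: "integrable N v" and w: "integrable N w"
    and ab: "0 \<le> a" "a \<le> b"
    and energy: "\<And>k. k \<in> {a, b} \<Longrightarrow> (\<integral>x. Gk k (v x) - Gk k (w x) \<partial>N)
      = - (\<integral>z. (if \<bar>u z\<bar> < k then g z else 0) \<partial>M) + (\<integral>z. f z * trunc k (u z) \<partial>M)"
  shows "(\<integral>z. (if a \<le> \<bar>u z\<bar> \<and> \<bar>u z\<bar> < b then g z else 0) \<partial>M)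
    \<le> (b - a) * ((\<integral>x. \<bar>w x\<bar> \<partial>N) + (\<integral>z. \<bar>f z\<bar> \<partial>M))"
proof -
  have [measurable]: "g \<in> borel_measurable M"
    using g by simp
  have cut_int: "integrable M (\<lambda>z. if \<bar>u z\<bar> < k then g z else 0)" for k
    by (rule Bochner_Integration.integrable_bound[OF g]) auto
  have "(\<integral>z. (if a \<le> \<bar>u z\<bar> \<and> \<bar>u z\<bar> < b then g z else 0) \<partial>M)
      = (\<integral>z. (if \<bar>u z\<bar> < b then g z else 0) - (if \<bar>u z\<bar> < a then g z else 0) \<partial>M)"
    using ab by (intro Bochner_Integration.integral_cong) auto
  also have "\<dots> = ((\<integral>z. f z * trunc b (u z) \<partial>M) - (\<integral>z. f z * trunc a (u z) \<partial>M))
      + ((\<integral>x. Gk a (v x) - Gk a (w x) \<partial>N) - (\<integral>x. Gk b (v x) - Gk b (w x) \<partial>N))"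
    using energy[of a] energy[of b] cut_int by simp
  also have "\<dots> \<le> (b - a) * (\<integral>z. \<bar>f z\<bar> \<partial>M) + (b - a) * (\<integral>x. \<bar>w x\<bar> \<partial>N)"
    using integral_mult_trunc_diff_le[OF f u ab] integral_Gk_diff_le[OF v w ab] by (rule add_mono)
  finally show ?thesis
    by (simp add: algebra_simps)
qed

lemma exists_in_interval_of_AE:
  assumes "AE t in lebesgue. t \<in> {0<..<T} \<longrightarrow> P t" "0 \<le> c" "c < (T::real)"
  shows "\<exists>t. c < t \<and> t < T \<and> P t"
proof (rule ccontr)
  assume "\<not> ?thesis"
  then have "AE t in lebesgue. t \<notin> {c<..<T}"
    using assms(2) by (rule_tac AE_mp[OF assms(1)]) auto
  then have "emeasure lebesgue {c<..<T} = 0"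
    by (subst (asm) AE_iff_measurable[of "{c<..<T}"]) auto
  moreover have "emeasure lebesgue {c<..<T} = ennreal (T - c)"
    using assms(3) by simp
  ultimately show False
    using assms(3) by simp
qed

lemma nn_integral_le_of_initial_time_slabs:
  fixes h :: "real \<times> 'a::euclidean_space \<Rightarrow> ennreal"
  assumes T: "0 < T" and \<Omega>: "open \<Omega>"
    and h: "h \<in> borel_measurable (lebesgue_on ({0<..<T} \<times> \<Omega>))"
    and slabs: "AE t in lebesgue. t \<in> {0<..<T} \<longrightarrow>
      (\<integral>\<^sup>+ z\<in>{0<..<t} \<times> \<Omega>. h z \<partial>lebesgue_on ({0<..<T} \<times> \<Omega>)) \<le> X"
  shows "(\<integral>\<^sup>+ z. h z \<partial>lebesgue_on ({0<..<T} \<times> \<Omega>)) \<le> X"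
proof -
  let ?L = "lebesgue_on ({0<..<T} \<times> \<Omega>)"
  define t where "t j = T - T / (real j + 2)" for j :: nat
  define F where "F j z = h z * indicator ({0<..<t j} \<times> \<Omega>) z" for j z
  have t_mono: "t i \<le> t j" if "i \<le> j" for i j
    unfolding t_def using T that by (simp add: frac_le)
  have t_range: "0 \<le> t j" "t j < T" for j
    unfolding t_def using T by (auto simp: field_simps)
  have inc: "incseq F"
    unfolding incseq_def le_fun_def F_def
    by (auto intro!: mult_left_mono simp: indicator_def dest: t_mono)
  have meas: "F j \<in> borel_measurable ?L" for j
    unfolding F_def using \<Omega>
    by (intro borel_measurable_times_ennreal h borel_measurable_indicator measurable_restrict_space1)
       (auto intro!: sets_lebesgue_open open_Times)
  have sup: "(SUP j. F j z) = h z" if "z \<in> space ?L" for z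
  proof (rule antisym)
    show "(SUP j. F j z) \<le> h z"
      by (rule SUP_least) (auto simp: F_def indicator_def)
    from that have z: "0 < fst z" "fst z < T" "snd z \<in> \<Omega>"
      by (auto simp: space_restrict_space mem_Times_iff)
    obtain j :: nat where "T / (T - fst z) < real j"
      using reals_Archimedean2 by blast
    then have "T / (real j + 2) < T / (T / (T - fst z))"
      using T z by (intro divide_strict_left_mono) auto
    then have "fst z < t j"
      using T z by (simp add: t_def)
    then have "F j z = h z"
      using z by (auto simp: F_def mem_Times_iff indicator_def)
    then show "h z \<le> (SUP j. F j z)"
      by (metis SUP_upper UNIV_I)
  qed
  have "(\<integral>\<^sup>+ z. h z \<partial>?L) = (\<integral>\<^sup>+ z. (SUP j. F j z) \<partial>?L)"
    by (rule nn_integral_cong) (simp add: sup)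
  also have "\<dots> = (SUP j. \<integral>\<^sup>+ z. F j z \<partial>?L)"
    by (rule nn_integral_monotone_convergence_SUP[OF inc meas])
  also have "\<dots> \<le> X"
  proof (rule SUP_least)
    fix j
    obtain s where s: "t j < s" "s < T" "(\<integral>\<^sup>+ z\<in>{0<..<s} \<times> \<Omega>. h z \<partial>?L) \<le> X"
      using exists_in_interval_of_AE[OF slabs t_range] by blast
    have "(\<integral>\<^sup>+ z. F j z \<partial>?L) \<le> (\<integral>\<^sup>+ z\<in>{0<..<s} \<times> \<Omega>. h z \<partial>?L)"
      unfolding F_def using s(1)
      by (intro nn_integral_mono) (auto intro!: mult_left_mono simp: indicator_def mem_Times_iff)
    then show "(\<integral>\<^sup>+ z. F j z \<partial>?L) \<le> X"
      using s(3) by (rule order_trans)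
  qed
  finally show ?thesis .
qed

lemma slab_nn_integral_le:
  fixes \<Omega> :: "'a::euclidean_space set" and g u f :: "real \<times> 'a \<Rightarrow> real" and u0 :: "'a \<Rightarrow> real"
  assumes T: "0 < T" and \<Omega>: "open \<Omega>"
    and g: "integrable (lebesgue_on ({0<..<T} \<times> \<Omega>)) g"
    and g_nonneg: "AE z in lebesgue_on ({0<..<T} \<times> \<Omega>). 0 \<le> g z"
    and u [measurable]: "u \<in> borel_measurable (lebesgue_on ({0<..<T} \<times> \<Omega>))"
    and f: "integrable (lebesgue_on ({0<..<T} \<times> \<Omega>)) f"
    and u0: "integrable (lebesgue_on \<Omega>) u0"
    and slices: "AE t in lebesgue. t \<in> {0<..<T} \<longrightarrow> integrable (lebesgue_on \<Omega>) (\<lambda>x. u (t, x))"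
    and energy: "\<And>k. 0 < k \<Longrightarrow> AE t in lebesgue. t \<in> {0<..<T} \<longrightarrow>
      (LINT x:\<Omega>|lebesgue. Gk k (u (t, x)) - Gk k (u0 x))
        = - (LINT z:{0<..<t} \<times> \<Omega>|lebesgue. (if \<bar>u z\<bar> < k then g z else 0))
          + (LINT z:{0<..<t} \<times> \<Omega>|lebesgue. f z * trunc k (u z))"
    and ab: "0 < a" "a \<le> b"
  shows "(\<integral>\<^sup>+ z. ennreal (if a \<le> \<bar>u z\<bar> \<and> \<bar>u z\<bar> < b then g z else 0)
      \<partial>lebesgue_on ({0<..<T} \<times> \<Omega>))
    \<le> ennreal ((b - a) * ((\<integral>x. \<bar>u0 x\<bar> \<partial>lebesgue_on \<Omega>)
      + (\<integral>z. \<bar>f z\<bar> \<partial>lebesgue_on ({0<..<T} \<times> \<Omega>))))"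
    (is "(\<integral>\<^sup>+ z. ennreal (?slab z) \<partial>?L) \<le> ennreal ((b - a) * ?B)")
proof (rule nn_integral_le_of_initial_time_slabs[OF T \<Omega>])
  let ?OT = "{0<..<T} \<times> \<Omega>"
  have OT: "?OT \<in> sets lebesgue" and \<Omega>_sets: "\<Omega> \<in> sets lebesgue"
    using \<Omega> by (auto intro!: sets_lebesgue_open open_Times)
  have [measurable]: "g \<in> borel_measurable ?L"
    using g by simp
  show "(\<lambda>z. ennreal (?slab z)) \<in> borel_measurable ?L"
    by measurable
  have "0 < b"
    using ab by simp
  have "AE t in lebesgue. t \<in> {0<..<T} \<longrightarrow> integrable (lebesgue_on \<Omega>) (\<lambda>x. u (t, x)) \<and>
    (\<forall>k\<in>{a, b}. (LINT x:\<Omega>|lebesgue. Gk k (u (t, x)) - Gk k (u0 x))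
        = - (LINT z:{0<..<t} \<times> \<Omega>|lebesgue. (if \<bar>u z\<bar> < k then g z else 0))
          + (LINT z:{0<..<t} \<times> \<Omega>|lebesgue. f z * trunc k (u z)))"
    using slices energy[OF ab(1)] energy[OF \<open>0 < b\<close>] by eventually_elim auto
  then show "AE t in lebesgue. t \<in> {0<..<T} \<longrightarrow>
      (\<integral>\<^sup>+ z\<in>{0<..<t} \<times> \<Omega>. ennreal (?slab z) \<partial>?L) \<le> ennreal ((b - a) * ?B)"
  proof eventually_elim
    case (elim t)
    show ?case
    proof
      assume t: "t \<in> {0<..<T}"
      let ?St = "{0<..<t} \<times> \<Omega>"
      let ?LS = "lebesgue_on ?St"
      have St: "?St \<in> sets lebesgue"
        using \<Omega> by (auto intro!: sets_lebesgue_open open_Times)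
      have "?St \<subseteq> ?OT"
        using t by auto
      note to_St = integrable_lebesgue_on_subset[OF St OT this]
      have [measurable]: "u \<in> borel_measurable ?LS" "g \<in> borel_measurable ?LS"
        using measurable_restrict_mono[OF u \<open>?St \<subseteq> ?OT\<close>] to_St[OF g] by auto
      have slab_int: "integrable ?LS ?slab"
        by (rule Bochner_Integration.integrable_bound[OF to_St[OF g]]) auto
      have "(\<integral>\<^sup>+ z\<in>?St. ennreal (?slab z) \<partial>?L) = (\<integral>\<^sup>+ z. ennreal (?slab z) \<partial>?LS)"
        by (rule set_nn_integral_lebesgue_on_subset[OF St OT \<open>?St \<subseteq> ?OT\<close>])
      also have "\<dots> = ennreal (\<integral>z. ?slab z \<partial>?LS)"
        using g_nonneg OT St \<open>?St \<subseteq> ?OT\<close>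
        by (intro nn_integral_eq_integral slab_int) (auto simp: AE_restrict_space_iff elim!: AE_mp)
      also have "(\<integral>z. ?slab z \<partial>?LS)
          \<le> (b - a) * ((\<integral>x. \<bar>u0 x\<bar> \<partial>lebesgue_on \<Omega>) + (\<integral>z. \<bar>f z\<bar> \<partial>?LS))"
        using elim t ab
        by (intro slab_integral_le_of_energy_identity to_St g f u0)
          (auto simp: set_integral_eq_integral_lebesgue_on[OF St]
            set_integral_eq_integral_lebesgue_on[OF \<Omega>_sets])
      also have "\<dots> \<le> (b - a) * ?B"
        using ab f \<open>?St \<subseteq> ?OT\<close>
        by (intro mult_left_mono add_left_mono integral_lebesgue_on_subset_le[OF St OT]) auto
      finally show "(\<integral>\<^sup>+ z\<in>?St. ennreal (?slab z) \<partial>?L) \<le> ennreal ((b - a) * ?B)"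
        by (simp add: ennreal_leI)
    qed
  qed
qed

lemma nn_integral_abs_mult_deriv2_smoothed_trunc_le:
  fixes g u \<phi> :: "'b \<Rightarrow> real"
  assumes g_nonneg: "AE z in M. 0 \<le> g z"
    and [measurable]: "g \<in> borel_measurable M" "u \<in> borel_measurable M"
    and Tf: "Tf \<in> smoothed_trunc Cs k \<epsilon>" and k: "0 \<le> k" and \<epsilon>: "0 < \<epsilon>"
    and \<phi>: "\<And>z. \<bar>\<phi> z\<bar> \<le> W"
    and slab: "(\<integral>\<^sup>+ z. ennreal (if k \<le> \<bar>u z\<bar> \<and> \<bar>u z\<bar> < k + 2 * \<epsilon> then g z else 0) \<partial>M)
      \<le> ennreal (2 * \<epsilon> * B)"
    and B: "0 \<le> B"
  shows "(\<integral>\<^sup>+ z. ennreal \<bar>g z * deriv (deriv Tf) (u z) * \<phi> z\<bar> \<partial>M) \<le> ennreal (2 * Cs * W * B)"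
proof -
  let ?slab = "\<lambda>z. if k \<le> \<bar>u z\<bar> \<and> \<bar>u z\<bar> < k + 2 * \<epsilon> then g z else 0"
  have deriv2_le: "\<bar>deriv (deriv Tf) y\<bar> \<le> Cs / \<epsilon>" for y
    using Tf by (simp add: smoothed_trunc_def)
  have Cs: "0 \<le> Cs"
    using deriv2_le[of 0] \<epsilon> by (smt (verit) divide_neg_pos)
  have W: "0 \<le> W"
    using \<phi>[of undefined] by linarith
  have "AE z in M. \<bar>g z * deriv (deriv Tf) (u z) * \<phi> z\<bar> \<le> Cs / \<epsilon> * W * ?slab z"
    using g_nonneg
  proof eventually_elim
    case (elim z)
    show ?case
    proof (cases "k \<le> \<bar>u z\<bar> \<and> \<bar>u z\<bar> < k + 2 * \<epsilon>")
      case True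
      have "\<bar>g z * deriv (deriv Tf) (u z) * \<phi> z\<bar> = g z * (\<bar>deriv (deriv Tf) (u z)\<bar> * \<bar>\<phi> z\<bar>)"
        using elim by (simp add: abs_mult)
      also have "\<dots> \<le> g z * (Cs / \<epsilon> * W)"
        using elim deriv2_le \<phi> Cs \<epsilon> by (intro mult_left_mono mult_mono) auto
      finally show ?thesis
        using True by (simp add: mult.commute)
    next
      case False
      then have "deriv (deriv Tf) (u z) = 0"
        using smoothed_trunc_deriv2_eq_0[OF Tf k \<epsilon>] \<epsilon> by force
      with False show ?thesis
        by (simp only: if_False)
    qed
  qed
  then have "(\<integral>\<^sup>+ z. ennreal \<bar>g z * deriv (deriv Tf) (u z) * \<phi> z\<bar> \<partial>M)
      \<le> (\<integral>\<^sup>+ z. ennreal (Cs / \<epsilon> * W * ?slab z) \<partial>M)"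
    by (intro nn_integral_mono_AE) (auto elim!: AE_mp intro: ennreal_leI)
  also have "\<dots> = (\<integral>\<^sup>+ z. ennreal (Cs / \<epsilon> * W) * ennreal (?slab z) \<partial>M)"
    using Cs W \<epsilon> by (intro nn_integral_cong) (simp add: ennreal_mult' del: times_divide_eq_left)
  also have "\<dots> = ennreal (Cs / \<epsilon> * W) * (\<integral>\<^sup>+ z. ennreal (?slab z) \<partial>M)"
    by (rule nn_integral_cmult) measurable
  also have "\<dots> \<le> ennreal (Cs / \<epsilon> * W) * ennreal (2 * \<epsilon> * B)"
    using slab by (rule mult_left_mono) simp
  also have "\<dots> = ennreal (2 * Cs * W * B)"
    using Cs W \<epsilon> B by (simp flip: ennreal_mult)
  finally show ?thesis .
qed

lemma standing_setting_domain:
  assumes "standing_setting \<Omega> T p A"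
  shows "open \<Omega>" "0 < T" "OmegaT T \<Omega> \<in> sets lebesgue" "\<Omega> \<in> sets lebesgue"
  using assms by (auto simp: standing_setting_def bounded_lipschitz_domain_def OmegaT_def
      intro!: sets_lebesgue_open open_Times)

lemma standing_setting_inner_nonneg:
  assumes "standing_setting \<Omega> T p A"
  shows "AE z in lebesgue_on (OmegaT T \<Omega>). \<forall>\<xi>. 0 \<le> A z \<xi> \<bullet> \<xi>"
proof -
  have "AE z in lebesgue. z \<in> OmegaT T \<Omega> \<longrightarrow> (\<forall>\<xi> \<eta>. 0 \<le> (A z \<xi> - A z \<eta>) \<bullet> (\<xi> - \<eta>))"
    "AE z in lebesgue. z \<in> OmegaT T \<Omega> \<longrightarrow> A z 0 = 0"
    using assms by (auto simp: standing_setting_def)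
  then have "AE z in lebesgue. z \<in> OmegaT T \<Omega> \<longrightarrow> (\<forall>\<xi>. 0 \<le> A z \<xi> \<bullet> \<xi>)"
    by eventually_elim (metis diff_zero)
  then show ?thesis
    using standing_setting_domain[OF assms] by (simp add: AE_restrict_space_iff)
qed

lemma approx_setting_integrable:
  assumes ss: "standing_setting \<Omega> T p A" and ap: "approx_setting \<Omega> T p A f u0 u Du"
  shows "u n \<in> borel_measurable (lebesgue_on (OmegaT T \<Omega>))"
    and "integrable (lebesgue_on (OmegaT T \<Omega>)) (\<lambda>z. A z (Du n z) \<bullet> Du n z)"
proof -
  note sets = standing_setting_domain[OF ss]
  have "set_integrable lebesgue (OmegaT T \<Omega>) (u n)" and Du: "var_Lp (OmegaT T \<Omega>) p (Du n)"
    and ADu: "var_Lp (OmegaT T \<Omega>) (\<lambda>z. conj_exp (p z)) (\<lambda>z. A z (Du n z))"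
    using ap by (auto simp: approx_setting_def)
  then show "u n \<in> borel_measurable (lebesgue_on (OmegaT T \<Omega>))"
    using sets by (auto simp: set_integrable_iff_integrable_lebesgue_on)
  obtain pmin where "1 < pmin" "\<forall>z\<in>OmegaT T \<Omega>. pmin \<le> p z"
    and "p \<in> borel_measurable (lebesgue_on (OmegaT T \<Omega>))"
    using ss by (auto simp: standing_setting_def)
  then show "integrable (lebesgue_on (OmegaT T \<Omega>)) (\<lambda>z. A z (Du n z) \<bullet> Du n z)"
    by (intro integrable_inner_of_var_Lp[OF sets(3) _ _ Du ADu]) force+
qed

lemma approx_setting_data_bound:
  assumes ss: "standing_setting \<Omega> T p A" and ap: "approx_setting \<Omega> T p A f u0 u Du"
  shows "\<exists>B\<ge>0. \<forall>n. integrable (lebesgue_on (OmegaT T \<Omega>)) (f n) \<and> integrable (lebesgue_on \<Omega>) (u0 n) \<and>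
    (\<integral>x. \<bar>u0 n x\<bar> \<partial>lebesgue_on \<Omega>) + (\<integral>z. \<bar>f n z\<bar> \<partial>lebesgue_on (OmegaT T \<Omega>)) \<le> B"
proof -
  note sets = standing_setting_domain[OF ss]
  let ?L = "lebesgue_on (OmegaT T \<Omega>)" and ?L\<Omega> = "lebesgue_on \<Omega>"
  obtain B where B: "\<And>n. (\<integral>\<^sup>+ x. ennreal \<bar>u0 n x\<bar> \<partial>?L\<Omega>) + (\<integral>\<^sup>+ z. ennreal \<bar>f n z\<bar> \<partial>?L) \<le> ennreal B"
    using ap unfolding set_nn_integral_eq_nn_integral_lebesgue_on[OF sets(3)]
      set_nn_integral_eq_nn_integral_lebesgue_on[OF sets(4)] approx_setting_def by blast
  show ?thesis
  proof (intro exI[of _ "max B 0"] conjI allI)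
    fix n
    have "f n \<in> borel_measurable ?L" "u0 n \<in> borel_measurable ?L\<Omega>"
      using ap by (auto simp: approx_setting_def Linf_def)
    moreover have "(\<integral>\<^sup>+ x. ennreal \<bar>u0 n x\<bar> \<partial>?L\<Omega>) \<le> ennreal B"
      "(\<integral>\<^sup>+ z. ennreal \<bar>f n z\<bar> \<partial>?L) \<le> ennreal B"
      using B[of n] by (auto intro: order_trans[rotated] add_increasing add_increasing2)
    ultimately show f: "integrable ?L (f n)" and u0: "integrable ?L\<Omega> (u0 n)"
      by (auto simp: ennreal_less_top intro!: integrableI_bounded intro: le_less_trans)
    have "ennreal ((\<integral>x. \<bar>u0 n x\<bar> \<partial>?L\<Omega>) + (\<integral>z. \<bar>f n z\<bar> \<partial>?L)) \<le> ennreal B"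
      using B[of n] f u0 by (simp add: nn_integral_eq_integral ennreal_plus)
    then show "(\<integral>x. \<bar>u0 n x\<bar> \<partial>?L\<Omega>) + (\<integral>z. \<bar>f n z\<bar> \<partial>?L) \<le> max B 0"
      by (cases "0 \<le> B") (auto simp: ennreal_le_iff2 ennreal_eq_0_iff ennreal_neg simp del: ennreal_plus)
  qed simp
qed

lemma approx_setting_slab_bound:
  assumes ss: "standing_setting \<Omega> T p A" and ap: "approx_setting \<Omega> T p A f u0 u Du"
  shows "\<exists>B\<ge>0. \<forall>n a b. 0 < a \<longrightarrow> a \<le> b \<longrightarrow>
    (\<integral>\<^sup>+ z. ennreal (if a \<le> \<bar>u n z\<bar> \<and> \<bar>u n z\<bar> < b then A z (Du n z) \<bullet> Du n z else 0)
      \<partial>lebesgue_on (OmegaT T \<Omega>)) \<le> ennreal ((b - a) * B)"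
proof -
  note sets = standing_setting_domain[OF ss]
  let ?L = "lebesgue_on (OmegaT T \<Omega>)" and ?L\<Omega> = "lebesgue_on \<Omega>"
  have OT: "OmegaT T \<Omega> = {0<..<T} \<times> \<Omega>"
    by (simp add: OmegaT_def)
  obtain B where "0 \<le> B" and data: "\<And>n. integrable ?L (f n)" "\<And>n. integrable ?L\<Omega> (u0 n)"
    "\<And>n. (\<integral>x. \<bar>u0 n x\<bar> \<partial>?L\<Omega>) + (\<integral>z. \<bar>f n z\<bar> \<partial>?L) \<le> B"
    using approx_setting_data_bound[OF ss ap] by blast
  show ?thesis
  proof (intro exI[of _ B] conjI allI impI)
    fix n and a b :: real
    assume ab: "0 < a" "a \<le> b"
    have slices: "AE t in lebesgue. t \<in> {0<..<T} \<longrightarrow> W011 \<Omega> (\<lambda>x. u n (t, x)) (\<lambda>x. Du n (t, x))"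
      and energy: "\<forall>k>0. AE t in lebesgue. t \<in> {0<..<T} \<longrightarrow>
          (LINT x:\<Omega>|lebesgue. Gk k (u n (t, x)) - Gk k (u0 n x))
          = - (LINT z:{0<..<t} \<times> \<Omega>|lebesgue.
                  A z (Du n z) \<bullet> (if \<bar>u n z\<bar> < k then Du n z else 0))
            + (LINT z:{0<..<t} \<times> \<Omega>|lebesgue. f n z * trunc k (u n z))"
      using ap by (auto simp: approx_setting_def)
    have "(\<integral>\<^sup>+ z. ennreal (if a \<le> \<bar>u n z\<bar> \<and> \<bar>u n z\<bar> < b then A z (Du n z) \<bullet> Du n z else 0) \<partial>?L)
      \<le> ennreal ((b - a) * ((\<integral>x. \<bar>u0 n x\<bar> \<partial>?L\<Omega>) + (\<integral>z. \<bar>f n z\<bar> \<partial>?L)))"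
      unfolding OT
    proof (rule slab_nn_integral_le[OF sets(2,1) _ _ _ _ data(2) _ _ ab])
      show "integrable (lebesgue_on ({0<..<T} \<times> \<Omega>)) (\<lambda>z. A z (Du n z) \<bullet> Du n z)"
        "u n \<in> borel_measurable (lebesgue_on ({0<..<T} \<times> \<Omega>))"
        "integrable (lebesgue_on ({0<..<T} \<times> \<Omega>)) (f n)"
        using approx_setting_integrable[OF ss ap] data(1) by (simp_all add: OT)
      show "AE z in lebesgue_on ({0<..<T} \<times> \<Omega>). 0 \<le> A z (Du n z) \<bullet> Du n z"
        using standing_setting_inner_nonneg[OF ss] unfolding OT by eventually_elim simp
      show "AE t in lebesgue. t \<in> {0<..<T} \<longrightarrow> integrable ?L\<Omega> (\<lambda>x. u n (t, x))"
        using slices by eventually_elim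
          (auto simp: W011_def weak_grad_def set_integrable_iff_integrable_lebesgue_on[OF sets(4)])
      fix k :: real
      assume "0 < k"
      then show "AE t in lebesgue. t \<in> {0<..<T} \<longrightarrow>
          (LINT x:\<Omega>|lebesgue. Gk k (u n (t, x)) - Gk k (u0 n x))
          = - (LINT z:{0<..<t} \<times> \<Omega>|lebesgue. (if \<bar>u n z\<bar> < k then A z (Du n z) \<bullet> Du n z else 0))
            + (LINT z:{0<..<t} \<times> \<Omega>|lebesgue. f n z * trunc k (u n z))"
        using energy by (simp add: if_distrib[of "inner _"] cong: if_cong)
    qed
    also have "\<dots> \<le> ennreal ((b - a) * B)"
      using ab data(3) by (intro ennreal_leI mult_left_mono) auto
    finally show "(\<integral>\<^sup>+ z. ennreal (if a \<le> \<bar>u n z\<bar> \<and> \<bar>u n z\<bar> < b then A z (Du n z) \<bullet> Du n z else 0) \<partial>?L)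
      \<le> ennreal ((b - a) * B)" .
  qed (rule \<open>0 \<le> B\<close>)
qed

theorem mainTheorem7:
  fixes \<Omega> :: "'a::euclidean_space set" and T :: real
    and p :: "real \<times> 'a \<Rightarrow> real" and A :: "real \<times> 'a \<Rightarrow> 'a \<Rightarrow> 'a"
    and f :: "nat \<Rightarrow> real \<times> 'a \<Rightarrow> real" and u0 :: "nat \<Rightarrow> 'a \<Rightarrow> real"
    and u :: "nat \<Rightarrow> real \<times> 'a \<Rightarrow> real" and Du :: "nat \<Rightarrow> real \<times> 'a \<Rightarrow> 'a"
    and Cs :: real
  assumes "standing_setting \<Omega> T p A"
    and "approx_setting \<Omega> T p A f u0 u Du"
  shows "\<exists>C :: nat \<Rightarrow> real \<Rightarrow> real. \<forall>(k::nat) \<psi> n \<epsilon> Tke.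
           k > 0 \<longrightarrow> test_fun \<Omega> \<psi> \<longrightarrow> (\<forall>x. \<psi> x \<ge> 0) \<longrightarrow> 0 < \<epsilon> \<longrightarrow> \<epsilon> < 1 \<longrightarrow>
           Tke \<in> smoothed_trunc Cs (real k) \<epsilon> \<longrightarrow>
           (\<integral>\<^sup>+ z\<in>OmegaT T \<Omega>.
              ennreal \<bar>(A z (Du n z) \<bullet> Du n z) * deriv (deriv Tke) (u n z) * \<psi> (snd z)\<bar> \<partial>lebesgue)
           \<le> ennreal (C k (W1inf_norm \<psi>))"
proof -
  obtain B where "0 \<le> B" and slab: "\<And>n a b. 0 < a \<Longrightarrow> a \<le> b \<Longrightarrow>
      (\<integral>\<^sup>+ z. ennreal (if a \<le> \<bar>u n z\<bar> \<and> \<bar>u n z\<bar> < b then A z (Du n z) \<bullet> Du n z else 0)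
        \<partial>lebesgue_on (OmegaT T \<Omega>)) \<le> ennreal ((b - a) * B)"
    using approx_setting_slab_bound[OF assms] by blast
  show ?thesis
  proof (intro exI[of _ "\<lambda>k w. 2 * Cs * w * B"] allI impI)
    fix k :: nat and \<psi> :: "'a \<Rightarrow> real" and n \<epsilon> Tke
    assume "0 < k" "test_fun \<Omega> \<psi>" "0 < \<epsilon>" "Tke \<in> smoothed_trunc Cs (real k) \<epsilon>"
    then show "(\<integral>\<^sup>+ z\<in>OmegaT T \<Omega>.
        ennreal \<bar>(A z (Du n z) \<bullet> Du n z) * deriv (deriv Tke) (u n z) * \<psi> (snd z)\<bar> \<partial>lebesgue)
      \<le> ennreal (2 * Cs * W1inf_norm \<psi> * B)"
      unfolding set_nn_integral_eq_nn_integral_lebesgue_on[OF standing_setting_domain(3)[OF assms(1)]]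
      using standing_setting_inner_nonneg[OF assms(1)] approx_setting_integrable[OF assms]
        slab[of "real k" "real k + 2 * \<epsilon>" n] abs_le_W1inf_norm \<open>0 \<le> B\<close>
      by (intro nn_integral_abs_mult_deriv2_smoothed_trunc_le) (auto elim!: AE_mp)
  qed
qed

end
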